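(* Consider the discrete-time system $x(t+1) = A x(t) + C v(t) + w$ for $t=0,1,2,\ldots$, with $A \in \mathbb{R}^{d_x\times d_x}$, $C \in \mathbb{R}^{d_x \times d_v}$, constant $w \in \mathbb{R}^{d_x}$, and disturbance input $v(t) \in \mathcal V = \langle c_{\mathcal V} \mid G_{\mathcal V}\rangle$, where $c_{\mathcal V} \in \mathbb{R}^{d_v}$ and $G_{\mathcal V} \in \mathbb{R}^{d_v \times n_{\mathcal V}}$. Let $\mathcal X = \{ x \in \mathbb{R}^{d_x} \mid \underline x \leq x \leq \overline x\}$ and $T \geq 0$ an integer. Let $G_{\mathcal I} \in \mathbb{R}^{d_x \times n_{\mathcal I}}$, $\alpha \in \mathbb{R}^{d_x}$, $\gamma \in \mathbb{R}^{n_{\mathcal I}}$ with $\gamma\geq 0$, $\Gamma = \mathrm{diag}(\gamma)$, and $\mathcal I = \langle \alpha \mid G_{\mathcal I}\Gamma\rangle$. If for all $t = 0,\ldots,T$ \[ A^t\alpha + \sum_{s=0}^{t-1} A^{t-1-s}(C c_{\mathcal V} + w) - |A^t G_{\mathcal I}|\gamma - \sum_{s=0}^{t-1} |A^{t-1-s} C G_{\mathcal V}|\mathbf{1}_{n_{\mathcal V}} \geq \underline x, \] \[ A^t\alpha + \sum_{s=0}^{t-1} A^{t-1-s}(C c_{\mathcal V} + w) + |A^t G_{\mathcal I}|\gamma + \sum_{s=0}^{t-1} |A^{t-1-s} C G_{\mathcal V}|\mathbf{1}_{n_{\mathcal V}} \leq \overline x, \] then $\mathcal I \subseteq \mathrm{Inv}_{[0,T]}(\mathcal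 X)$, where $\mathrm{Inv}_{[0,T]}(\mathcal X)$ is the set of $x(0) \in \mathcal X$ such that for every disturbance signal with $v(t) \in \mathcal V$ for all $t$, the resulting trajectory satisfies $x(t) \in \mathcal X$ for all $t = 0,\ldots,T$.
   Context: Vector inequalities are elementwise; $|M|$ is the elementwise absolute value; $\mathbf{1}_n$ is the all-ones vector in $\mathbb{R}^n$. The notation $\langle c \mid G\rangle$ denotes the zonotope $\{c + G\lambda : \lambda \in [-1,1]^n\}$. $\mathrm{diag}(\gamma)$ is the diagonal matrix with $\gamma$ on its diagonal. *)

theory Defs
  imports "HOL-Analysis.Analysis"
begin

primrec matpow :: "real^'n^'n \<Rightarrow> nat \<Rightarrow> real^'n^'n" where
  "matpow A 0 = mat 1"
| "matpow A (Suc t) = A ** matpow A t"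

definition mabs :: "real^'n^'m \<Rightarrow> real^'n^'m" where
  "mabs M = (\<chi> i j. \<bar>M $ i $ j\<bar>)"

definition ones :: "real^'n" where
  "ones = (\<chi> i. 1)"

definition diagm :: "real^'n \<Rightarrow> real^'n^'n" where
  "diagm g = (\<chi> i j. if i = j then g $ i else 0)"

definition zonotope :: "real^'m \<Rightarrow> real^'n^'m \<Rightarrow> (real^'m) set" where
  "zonotope c G = {c + G *v lam | lam. \<forall>i. \<bar>lam $ i\<bar> \<le> 1}"

definition box_set :: "real^'n \<Rightarrow> real^'n \<Rightarrow> (real^'n) set" where
  "box_set lo hi = {x. \<forall>i. lo $ i \<le> x $ i \<and> x $ i \<le> hi $ i}"

primrec traj :: "real^'dx^'dx \<Rightarrow> real^'dv^'dx \<Rightarrow> real^'dx \<Rightarrow> real^'dx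
    \<Rightarrow> (nat \<Rightarrow> real^'dv) \<Rightarrow> nat \<Rightarrow> real^'dx" where
  "traj A C w x0 v 0 = x0"
| "traj A C w x0 v (Suc t) = A *v traj A C w x0 v t + C *v v t + w"

definition Inv :: "real^'dx^'dx \<Rightarrow> real^'dv^'dx \<Rightarrow> real^'dx \<Rightarrow> (real^'dv) set
    \<Rightarrow> nat \<Rightarrow> (real^'dx) set \<Rightarrow> (real^'dx) set" where
  "Inv A C w V T X = {x0 \<in> X. \<forall>v. (\<forall>t. v t \<in> V) \<longrightarrow>
      (\<forall>t\<le>T. traj A C w x0 v t \<in> X)}"

end

theory Submission
  imports Defs
begin

text \<open>Unrolling the recursion, x(t) = A^t x(0) + \<Sum>s<t. A^(t-1-s) (C v(s) + w) is affine
  in the initial state and the disturbances. Writing x(0) = \<alpha> + GI u with |u| \<le> \<gamma> and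
  v(s) = cV + GV \<mu>(s) with |\<mu>(s)| \<le> 1 splits x(t) into the centre occurring in the
  hypotheses plus terms M u and M' \<mu>(s), bounded componentwise by |M| \<gamma> and |M'| 1.
  So x(t) stays in the box of that centre and radius, which the hypotheses put inside X.\<close>

lemma traj_eq_sum:
  "traj A C w x0 v t = matpow A t *v x0 + (\<Sum>s<t. matpow A (t - 1 - s) *v (C *v v s + w))"
proof (induction t)
  case 0
  then show ?case by simp
next
  case (Suc t)
  have "(\<Sum>s<t. matpow A (t - s) *v (C *v v s + w))
      = (\<Sum>s<t. A *v (matpow A (t - 1 - s) *v (C *v v s + w)))"
  proof (rule sum.cong[OF refl])
    fix s assume "s \<in> {..<t}"
    then have "t - s = Suc (t - 1 - s)" by auto
    then show "matpow A (t - s) *v (C *v v s + w) = A *v (matpow A (t - 1 - s) *v (C *v v s + w))"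
      by (simp add: matrix_vector_mul_assoc)
  qed
  also have "\<dots> = A *v (\<Sum>s<t. matpow A (t - 1 - s) *v (C *v v s + w))"
    by (simp add: linear_sum[OF matrix_vector_mul_linear] o_def)
  finally show ?case using Suc
    by (simp add: matrix_vector_mul_assoc algebra_simps)
qed

lemma traj_affine_decomposition:
  assumes "x0 = \<alpha> + G *v u" and "\<And>s. v s = c + H *v \<mu> s"
  shows "traj A C w x0 v t
    = matpow A t *v \<alpha> + (\<Sum>s<t. matpow A (t - 1 - s) *v (C *v c + w))
      + (matpow A t ** G) *v u + (\<Sum>s<t. (matpow A (t - 1 - s) ** C ** H) *v \<mu> s)"
proof -
  have "matpow A (t - 1 - s) *v (C *v v s + w)
      = matpow A (t - 1 - s) *v (C *v c + w) + (matpow A (t - 1 - s) ** C ** H) *v \<mu> s" for s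
    by (simp add: assms(2) matrix_vector_mul_assoc matrix_mul_assoc algebra_simps)
  then show ?thesis
    by (simp add: traj_eq_sum assms(1) sum.distrib matrix_vector_mul_assoc algebra_simps)
qed

lemma abs_matrix_vector_mult_le:
  fixes M :: "real^'n^'m"
  assumes "\<And>j. \<bar>u $ j\<bar> \<le> b $ j"
  shows "\<bar>(M *v u) $ i\<bar> \<le> (mabs M *v b) $ i"
proof -
  have "\<bar>(M *v u) $ i\<bar> = \<bar>\<Sum>j\<in>UNIV. M $ i $ j * u $ j\<bar>"
    by (simp add: matrix_vector_mult_def)
  also have "\<dots> \<le> (\<Sum>j\<in>UNIV. \<bar>M $ i $ j * u $ j\<bar>)"
    by (rule sum_abs)
  also have "\<dots> \<le> (\<Sum>j\<in>UNIV. \<bar>M $ i $ j\<bar> * b $ j)"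
    by (rule sum_mono) (simp add: abs_mult assms mult_left_mono)
  also have "\<dots> = (mabs M *v b) $ i"
    by (simp add: matrix_vector_mult_def mabs_def)
  finally show ?thesis .
qed

lemma diagm_mult_vector: "diagm g *v x = (\<chi> i. g $ i * x $ i)"
  unfolding vec_eq_iff matrix_vector_mult_def diagm_def
  by (simp add: if_distrib[of "\<lambda>a. a * _"] cong: if_cong)

lemma zonotope_mult_diagm_subset:
  assumes "\<And>j. \<gamma> $ j \<ge> 0"
  shows "zonotope \<alpha> (G ** diagm \<gamma>) \<subseteq> {\<alpha> + G *v u | u. \<forall>j. \<bar>u $ j\<bar> \<le> \<gamma> $ j}"
proof
  fix x assume "x \<in> zonotope \<alpha> (G ** diagm \<gamma>)"
  then obtain l where x: "x = \<alpha> + (G ** diagm \<gamma>) *v l" and l: "\<And>i. \<bar>l $ i\<bar> \<le> 1"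
    unfolding zonotope_def by auto
  show "x \<in> {\<alpha> + G *v u | u. \<forall>j. \<bar>u $ j\<bar> \<le> \<gamma> $ j}"
  proof (intro CollectI exI conjI allI)
    show "x = \<alpha> + G *v (diagm \<gamma> *v l)"
      using x by (simp add: matrix_vector_mul_assoc)
    show "\<bar>(diagm \<gamma> *v l) $ j\<bar> \<le> \<gamma> $ j" for j
      using l[of j] assms[of j] by (simp add: diagm_mult_vector abs_mult mult_left_le)
  qed
qed

lemma center_mem_zonotope: "c \<in> zonotope c G"
  unfolding zonotope_def by (auto intro!: exI[of _ 0])

lemma traj_deviation_le:
  assumes x0: "x0 \<in> zonotope \<alpha> (GI ** diagm \<gamma>)" and \<gamma>: "\<And>j. \<gamma> $ j \<ge> 0"
    and v: "\<And>s. v s \<in> zonotope cV GV"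
  shows "\<bar>(traj A C w x0 v t
      - (matpow A t *v \<alpha> + (\<Sum>s<t. matpow A (t - 1 - s) *v (C *v cV + w)))) $ i\<bar>
    \<le> (mabs (matpow A t ** GI) *v \<gamma> + (\<Sum>s<t. mabs (matpow A (t - 1 - s) ** C ** GV) *v ones)) $ i"
proof -
  obtain u where u0: "x0 = \<alpha> + GI *v u" and u: "\<And>j. \<bar>u $ j\<bar> \<le> \<gamma> $ j"
    using x0 zonotope_mult_diagm_subset[OF \<gamma>] by blast
  obtain \<mu> where v\<mu>: "\<And>s. v s = cV + GV *v \<mu> s" and \<mu>: "\<And>s j. \<bar>\<mu> s $ j\<bar> \<le> ones $ j"
    using v unfolding zonotope_def ones_def by simp metis
  let ?M = "\<lambda>s. matpow A (t - 1 - s) ** C ** GV"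
  have "\<bar>(traj A C w x0 v t
      - (matpow A t *v \<alpha> + (\<Sum>s<t. matpow A (t - 1 - s) *v (C *v cV + w)))) $ i\<bar>
      = \<bar>((matpow A t ** GI) *v u) $ i + (\<Sum>s<t. (?M s *v \<mu> s) $ i)\<bar>"
    by (simp add: traj_affine_decomposition[OF u0 v\<mu>])
  also have "\<dots> \<le> \<bar>((matpow A t ** GI) *v u) $ i\<bar> + (\<Sum>s<t. \<bar>(?M s *v \<mu> s) $ i\<bar>)"
    by (rule order_trans[OF abs_triangle_ineq add_left_mono[OF sum_abs]])
  also have "\<dots> \<le> (mabs (matpow A t ** GI) *v \<gamma>) $ i + (\<Sum>s<t. (mabs (?M s) *v ones) $ i)"
    by (intro add_mono sum_mono abs_matrix_vector_mult_le u \<mu>)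
  finally show ?thesis by simp
qed

lemma mem_box_set_if_deviation_le:
  assumes "\<And>i. \<bar>(x - a) $ i\<bar> \<le> r $ i"
    and "\<And>i. lo $ i \<le> (a - r) $ i" and "\<And>i. (a + r) $ i \<le> hi $ i"
  shows "x \<in> box_set lo hi"
  unfolding box_set_def
proof (intro CollectI allI)
  fix i
  show "lo $ i \<le> x $ i \<and> x $ i \<le> hi $ i"
    using assms[of i] by (simp add: abs_le_iff)
qed

lemma traj_mem_box_set:
  assumes x0: "x0 \<in> zonotope \<alpha> (GI ** diagm \<gamma>)" and \<gamma>: "\<And>j. \<gamma> $ j \<ge> 0"
    and v: "\<And>s. v s \<in> zonotope cV GV"
    and lower: "\<forall>i. xlo $ i \<le>
      (matpow A t *v \<alpha> + (\<Sum>s<t. matpow A (t - 1 - s) *v (C *v cV + w))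
       - mabs (matpow A t ** GI) *v \<gamma>
       - (\<Sum>s<t. mabs (matpow A (t - 1 - s) ** C ** GV) *v ones)) $ i"
    and upper: "\<forall>i.
      (matpow A t *v \<alpha> + (\<Sum>s<t. matpow A (t - 1 - s) *v (C *v cV + w))
       + mabs (matpow A t ** GI) *v \<gamma>
       + (\<Sum>s<t. mabs (matpow A (t - 1 - s) ** C ** GV) *v ones)) $ i \<le> xhi $ i"
  shows "traj A C w x0 v t \<in> box_set xlo xhi"
proof (rule mem_box_set_if_deviation_le[OF traj_deviation_le[OF x0 \<gamma> v]])
qed (use lower upper in \<open>simp_all only: diff_diff_eq add.assoc\<close>)

theorem proposition4p3:
  fixes A :: "real^'dx^'dx" and C :: "real^'dv^'dx" and w :: "real^'dx"
    and cV :: "real^'dv" and GV :: "real^'nV^'dv"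
    and xlo xhi :: "real^'dx" and T :: nat
    and GI :: "real^'nI^'dx" and \<alpha> :: "real^'dx" and \<gamma> :: "real^'nI"
  assumes gamma_nonneg: "\<forall>i. \<gamma> $ i \<ge> 0"
    and lower: "\<forall>t\<le>T. \<forall>i. xlo $ i \<le>
      (matpow A t *v \<alpha> + (\<Sum>s<t. matpow A (t - 1 - s) *v (C *v cV + w))
       - mabs (matpow A t ** GI) *v \<gamma>
       - (\<Sum>s<t. mabs (matpow A (t - 1 - s) ** C ** GV) *v ones)) $ i"
    and upper: "\<forall>t\<le>T. \<forall>i.
      (matpow A t *v \<alpha> + (\<Sum>s<t. matpow A (t - 1 - s) *v (C *v cV + w))
       + mabs (matpow A t ** GI) *v \<gamma>
       + (\<Sum>s<t. mabs (matpow A (t - 1 - s) ** C ** GV) *v ones)) $ i \<le> xhi $ i"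
  shows "zonotope \<alpha> (GI ** diagm \<gamma>) \<subseteq> Inv A C w (zonotope cV GV) T (box_set xlo xhi)"
proof
  fix x0 assume x0: "x0 \<in> zonotope \<alpha> (GI ** diagm \<gamma>)"
  have traj_in_box: "traj A C w x0 v t \<in> box_set xlo xhi"
    if "\<forall>s. v s \<in> zonotope cV GV" and "t \<le> T" for v t
    using traj_mem_box_set[OF x0] gamma_nonneg lower upper that by blast
  have "x0 \<in> box_set xlo xhi"
    using traj_in_box[of "\<lambda>_. cV" 0] by (simp add: center_mem_zonotope)
  then show "x0 \<in> Inv A C w (zonotope cV GV) T (box_set xlo xhi)"
    unfolding Inv_def using traj_in_box by blast
qed

end
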